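(* Let $R$ be a commutative ring with unit, let $Q=(V,E,X,s,t,l)$ be a labelled quiver with labels $X$ and let $F\subseteq R\langle X\rangle_Q$. Then for any $f\in R\langle X\rangle$ the following are equivalent: (1) $f$ is compatible with $Q$ and lies in the two-sided ideal generated by $F$; (2) $f$ is compatible with $Q$ and can be rewritten to zero using $F$; (3) $f$ is a $Q$-consequence of $F$.
   Context: $R\langle X\rangle$ is the free algebra of noncommutative polynomials over $R$ in indeterminates $X$, with monomials the words in $\langle X\rangle$ (including the empty word $1$); $\operatorname{supp}(f)$ is the set of monomials with nonzero coefficient. Rewriting: for $f,g$ such that some $m_g\in\operatorname{supp}(g)$ divides some $m_f\in\operatorname{supp}(f)$, i.e. $m_f=am_gb$ with $a,b\in\langle X\rangle$, and $\lambda\in R$, $f+\lambda agb$ is obtained from $f$ by a rewriting step using $g$; $f$ can be rewritten to $h$ using $G$ if there is a finite chain $f=f_0,f_1,\dots,f_n=h$ where each $f_i$ is obtained from $f_{i-1}$ by a rewriting step using some element of $G$. A labelled quiver $Q=(V,E,X,s,t,l)$ has vertices $V$, edges $E$, source/target maps $s,t:E\to V$ and labelling $l:E\to X$. A nonempty path $p=e_n\cdots e_1$ (with $s(e_{i+1})=t(e_i)$) has label $l(e_n)\cdots l(e_1)$, source $s(e_1)$, target $t(e_n)$; each vertex $v$ has an empty path with label $1$ and source and target $v$. For a monomial $m$, $\sigma(m)=\{(s(p),t(p)) : p \text{ a path with } l(p)=m\}$; for a polynomial $f$, $\sigma(f)=\bigcap_{m\in\operatorname{supp}(f)}\sigma(m)$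 (so $\sigma(0)=V\times V$). $f$ is compatible with $Q$ if $\sigma(f)\neq\emptyset$, and uniformly compatible if it is compatible and all $m\in\operatorname{supp}(f)$ have the same set $\sigma(m)$; $R\langle X\rangle_Q$ is the set of uniformly compatible polynomials. For $F\subseteq R\langle X\rangle_Q$, a polynomial $f$ is a $Q$-consequence of $F$ if $f$ is compatible with $Q$ and there are finitely many $a_i,b_i\in R\langle X\rangle_Q$ and $f_i\in F$ with $f=\sum_i a_if_ib_i$ and $\sigma(a_if_ib_i)\supseteq\sigma(f)$ for every $i$ (the empty sum is allowed). *)

theory Defs
  imports Main
begin

text \<open>Noncommutative polynomials over a commutative ring 'r in indeterminates of type 'x:
  coefficient functions on words (lists over 'x) with finite support.\<close>

type_synonym ('x, 'r) ncpoly = "'x list \<Rightarrow> 'r"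

definition ncpoly :: "('x, 'r::comm_ring_1) ncpoly \<Rightarrow> bool" where
  "ncpoly f \<longleftrightarrow> finite {w. f w \<noteq> 0}"

definition supp :: "('x, 'r::comm_ring_1) ncpoly \<Rightarrow> 'x list set" where
  "supp f = {w. f w \<noteq> 0}"

definition nczero :: "('x, 'r::comm_ring_1) ncpoly" where
  "nczero = (\<lambda>_. 0)"

definition ncadd :: "('x, 'r::comm_ring_1) ncpoly \<Rightarrow> ('x, 'r) ncpoly \<Rightarrow> ('x, 'r) ncpoly" where
  "ncadd f g = (\<lambda>w. f w + g w)"

definition ncscale :: "'r::comm_ring_1 \<Rightarrow> ('x, 'r) ncpoly \<Rightarrow> ('x, 'r) ncpoly" where
  "ncscale c f = (\<lambda>w. c * f w)"

definition ncmul :: "('x, 'r::comm_ring_1) ncpoly \<Rightarrow> ('x, 'r) ncpoly \<Rightarrow> ('x, 'r) ncpoly" where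
  "ncmul f g = (\<lambda>w. \<Sum>i\<le>length w. f (take i w) * g (drop i w))"

definition ncmon :: "'x list \<Rightarrow> ('x, 'r::comm_ring_1) ncpoly" where
  "ncmon m = (\<lambda>w. if w = m then 1 else 0)"

definition ncsum_list :: "('x, 'r::comm_ring_1) ncpoly list \<Rightarrow> ('x, 'r) ncpoly" where
  "ncsum_list ps = foldr ncadd ps nczero"

inductive_set nc_ideal :: "('x, 'r::comm_ring_1) ncpoly set \<Rightarrow> ('x, 'r) ncpoly set"
  for F where
  zero: "nczero \<in> nc_ideal F"
| gen: "\<lbrakk>g \<in> F; ncpoly a; ncpoly b\<rbrakk> \<Longrightarrow> ncmul (ncmul a g) b \<in> nc_ideal F"
| add: "\<lbrakk>p \<in> nc_ideal F; q \<in> nc_ideal F\<rbrakk> \<Longrightarrow> ncadd p q \<in> nc_ideal F"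

definition rewrite_step :: "('x, 'r::comm_ring_1) ncpoly set \<Rightarrow> ('x, 'r) ncpoly \<Rightarrow> ('x, 'r) ncpoly \<Rightarrow> bool" where
  "rewrite_step G f f' \<longleftrightarrow>
     (\<exists>g\<in>G. \<exists>mg\<in>supp g. \<exists>mf\<in>supp f. \<exists>a b. \<exists>c::'r.
        mf = a @ mg @ b \<and> f' = ncadd f (ncscale c (ncmul (ncmul (ncmon a) g) (ncmon b))))"

definition rewrites_to :: "('x, 'r::comm_ring_1) ncpoly set \<Rightarrow> ('x, 'r) ncpoly \<Rightarrow> ('x, 'r) ncpoly \<Rightarrow> bool" where
  "rewrites_to G f h \<longleftrightarrow> (rewrite_step G)\<^sup>*\<^sup>* f h"

text \<open>A path e_n ... e_1 is the list [e_1, ..., e_n] of edges; its label is the word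
  l(e_n) ... l(e_1), i.e. rev (map l p); source s(e_1), target t(e_n).\<close>

definition quiver :: "'v set \<Rightarrow> 'e set \<Rightarrow> ('e \<Rightarrow> 'v) \<Rightarrow> ('e \<Rightarrow> 'v) \<Rightarrow> bool" where
  "quiver V E s t \<longleftrightarrow> (\<forall>e\<in>E. s e \<in> V \<and> t e \<in> V)"

definition is_path :: "'e set \<Rightarrow> ('e \<Rightarrow> 'v) \<Rightarrow> ('e \<Rightarrow> 'v) \<Rightarrow> 'e list \<Rightarrow> bool" where
  "is_path E s t p \<longleftrightarrow> p \<noteq> [] \<and> set p \<subseteq> E \<and>
     (\<forall>i. Suc i < length p \<longrightarrow> s (p ! Suc i) = t (p ! i))"

definition sigma_mon :: "'v set \<Rightarrow> 'e set \<Rightarrow> ('e \<Rightarrow> 'v) \<Rightarrow> ('e \<Rightarrow> 'v) \<Rightarrow> ('e \<Rightarrow> 'x)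
    \<Rightarrow> 'x list \<Rightarrow> ('v \<times> 'v) set" where
  "sigma_mon V E s t l m =
     {(v, v) | v. v \<in> V \<and> m = []} \<union>
     {(s (hd p), t (last p)) | p. is_path E s t p \<and> rev (map l p) = m}"

definition sigma :: "'v set \<Rightarrow> 'e set \<Rightarrow> ('e \<Rightarrow> 'v) \<Rightarrow> ('e \<Rightarrow> 'v) \<Rightarrow> ('e \<Rightarrow> 'x)
    \<Rightarrow> ('x, 'r::comm_ring_1) ncpoly \<Rightarrow> ('v \<times> 'v) set" where
  "sigma V E s t l f = {vw \<in> V \<times> V. \<forall>m\<in>supp f. vw \<in> sigma_mon V E s t l m}"

definition compatible :: "'v set \<Rightarrow> 'e set \<Rightarrow> ('e \<Rightarrow> 'v) \<Rightarrow> ('e \<Rightarrow> 'v) \<Rightarrow> ('e \<Rightarrow> 'x)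
    \<Rightarrow> ('x, 'r::comm_ring_1) ncpoly \<Rightarrow> bool" where
  "compatible V E s t l f \<longleftrightarrow> sigma V E s t l f \<noteq> {}"

definition unif_compatible :: "'v set \<Rightarrow> 'e set \<Rightarrow> ('e \<Rightarrow> 'v) \<Rightarrow> ('e \<Rightarrow> 'v) \<Rightarrow> ('e \<Rightarrow> 'x)
    \<Rightarrow> ('x, 'r::comm_ring_1) ncpoly \<Rightarrow> bool" where
  "unif_compatible V E s t l f \<longleftrightarrow> compatible V E s t l f \<and>
     (\<forall>m\<in>supp f. \<forall>m'\<in>supp f. sigma_mon V E s t l m = sigma_mon V E s t l m')"

definition ncpoly_Q :: "'v set \<Rightarrow> 'e set \<Rightarrow> ('e \<Rightarrow> 'v) \<Rightarrow> ('e \<Rightarrow> 'v) \<Rightarrow> ('e \<Rightarrow> 'x)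
    \<Rightarrow> ('x, 'r::comm_ring_1) ncpoly set" where
  "ncpoly_Q V E s t l = {f. ncpoly f \<and> unif_compatible V E s t l f}"

definition Q_consequence :: "'v set \<Rightarrow> 'e set \<Rightarrow> ('e \<Rightarrow> 'v) \<Rightarrow> ('e \<Rightarrow> 'v) \<Rightarrow> ('e \<Rightarrow> 'x)
    \<Rightarrow> ('x, 'r::comm_ring_1) ncpoly set \<Rightarrow> ('x, 'r) ncpoly \<Rightarrow> bool" where
  "Q_consequence V E s t l F f \<longleftrightarrow> compatible V E s t l f \<and>
     (\<exists>cs :: (('x, 'r) ncpoly \<times> ('x, 'r) ncpoly \<times> ('x, 'r) ncpoly) list.
        (\<forall>(a, g, b) \<in> set cs. a \<in> ncpoly_Q V E s t l \<and> b \<in> ncpoly_Q V E s t l \<and> g \<in> F \<and>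
            sigma V E s t l f \<subseteq> sigma V E s t l (ncmul (ncmul a g) b)) \<and>
        f = ncsum_list (map (\<lambda>(a, g, b). ncmul (ncmul a g) b) cs))"

end

theory Submission
  imports Defs
begin

text \<open>Membership in the ideal and rewritability to zero both amount to f being a finite sum of
  terms \<open>c u g w\<close> with \<open>c \<in> R\<close>, words u, w and \<open>g \<in> F\<close>. For the ideal this is the bilinear
  expansion of \<open>a g b\<close>.
  A rewriting step changes f by one such term; conversely, if such a sum is nonzero, one of its
  terms is nonzero at a monomial of f, and subtracting that term is a rewriting step that
  shortens the sum.

  For Q-consequences, \<open>\<sigma>(u m w)\<close> is the relational composite of \<open>\<sigma>(u)\<close>, \<open>\<sigma>(m)\<close>, \<open>\<sigma>(w)\<close>,
  so, g being uniformly compatible, all monomials of \<open>c u g w\<close> have the same \<open>\<sigma>\<close>. Dropping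
  the terms whose \<open>\<sigma>\<close> does not contain \<open>\<sigma>(f)\<close> leaves the sum unchanged (at a monomial of f the
  dropped terms vanish, at any other monomial the kept ones do), and every kept term satisfies
  the \<open>\<sigma>\<close>-condition with u and w uniformly compatible.\<close>


lemma ncsum_list_apply: "ncsum_list ps w = (\<Sum>p\<leftarrow>ps. p w)"
  by (induction ps) (auto simp: ncsum_list_def ncadd_def nczero_def)

lemma ncsum_list_append: "ncsum_list (ps @ qs) = ncadd (ncsum_list ps) (ncsum_list qs)"
  by (rule ext) (simp add: ncsum_list_apply ncadd_def)

lemma ncsum_list_singleton: "ncsum_list [p] = p"
  by (rule ext) (simp add: ncsum_list_apply)

lemma ncscale_ncscale: "ncscale c (ncscale d f) = ncscale (c * d) f"
  by (rule ext) (simp add: ncscale_def mult.assoc)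

lemma ncscale_ncsum_list: "ncscale c (ncsum_list ps) = ncsum_list (map (ncscale c) ps)"
  by (rule ext) (simp add: ncscale_def ncsum_list_apply sum_list_const_mult o_def)

lemma ncmul_ncadd_left: "ncmul (ncadd f g) h = ncadd (ncmul f h) (ncmul g h)"
  by (rule ext) (simp add: ncmul_def ncadd_def sum.distrib distrib_right)

lemma ncmul_ncadd_right: "ncmul h (ncadd f g) = ncadd (ncmul h f) (ncmul h g)"
  by (rule ext) (simp add: ncmul_def ncadd_def sum.distrib distrib_left)

lemma ncmul_nczero_left: "ncmul nczero h = nczero"
  by (rule ext) (simp add: ncmul_def nczero_def)

lemma ncmul_nczero_right: "ncmul h nczero = nczero"
  by (rule ext) (simp add: ncmul_def nczero_def)

lemma ncmul_ncscale_left: "ncmul (ncscale c f) h = ncscale c (ncmul f h)"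
  by (rule ext) (simp add: ncmul_def ncscale_def sum_distrib_left mult.assoc)

lemma ncmul_ncscale_right: "ncmul h (ncscale c f) = ncscale c (ncmul h f)"
  by (rule ext) (simp add: ncmul_def ncscale_def sum_distrib_left mult.left_commute)

lemma ncmul_ncsum_list_left: "ncmul (ncsum_list ps) h = ncsum_list (map (\<lambda>p. ncmul p h) ps)"
  by (induction ps) (simp_all add: ncsum_list_def ncmul_nczero_left ncmul_ncadd_left)

lemma ncmul_ncsum_list_right: "ncmul h (ncsum_list ps) = ncsum_list (map (ncmul h) ps)"
  by (induction ps) (simp_all add: ncsum_list_def ncmul_nczero_right ncmul_ncadd_right)

lemma ncmul_ncmon_left_apply:
  "ncmul (ncmon u) g x = (if take (length u) x = u then g (drop (length u) x) else 0)"
proof -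
  have "ncmul (ncmon u) g x
      = (\<Sum>i\<le>length x. if i = length u then (if take (length u) x = u then g (drop (length u) x) else 0) else 0)"
    unfolding ncmul_def ncmon_def by (rule sum.cong) auto
  then show ?thesis
    by (cases "length u \<le> length x") (auto dest: arg_cong[of _ _ length])
qed

lemma ncmul_ncmon_right_apply:
  "ncmul g (ncmon w) x =
     (if drop (length x - length w) x = w then g (take (length x - length w) x) else 0)"
  unfolding ncmul_def ncmon_def
  by (subst sum.cong[OF refl, where h = "\<lambda>i. if i = length x - length w
      then (if drop (length x - length w) x = w then g (take (length x - length w) x) else 0) else 0"])
     auto

lemma ncpoly_ncmon: "ncpoly (ncmon u)"
  unfolding ncpoly_def ncmon_def by simp

lemma ncpoly_ncscale: "ncpoly f \<Longrightarrow> ncpoly (ncscale c f)"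
  unfolding ncpoly_def ncscale_def by (rule finite_subset[rotated]) auto

lemma ncpoly_eq_ncsum_list_ncmon:
  assumes "ncpoly a"
  obtains us where "a = ncsum_list (map (\<lambda>u. ncscale (a u) (ncmon u)) us)"
proof -
  obtain us where us: "distinct us" "set us = supp a"
    using assms finite_distinct_list unfolding ncpoly_def supp_def by blast
  have "a = ncsum_list (map (\<lambda>u. ncscale (a u) (ncmon u)) us)"
  proof
    fix x
    have "ncsum_list (map (\<lambda>u. ncscale (a u) (ncmon u)) us) x = (\<Sum>u\<in>supp a. if x = u then a x else 0)"
      using us by (simp add: ncsum_list_apply ncscale_def ncmon_def sum_list_distinct_conv_sum_set
          if_distrib cong: if_cong)
    then show "a x = ncsum_list (map (\<lambda>u. ncscale (a u) (ncmon u)) us) x"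
      using assms by (simp add: sum.delta' supp_def ncpoly_def)
  qed
  then show ?thesis by (rule that)
qed


fun mon_multiple :: "'r::comm_ring_1 \<times> 'x list \<times> ('x, 'r) ncpoly \<times> 'x list \<Rightarrow> ('x, 'r) ncpoly" where
  "mon_multiple (c, u, g, w) = ncscale c (ncmul (ncmul (ncmon u) g) (ncmon w))"

definition mon_combinations :: "('x, 'r::comm_ring_1) ncpoly set \<Rightarrow> ('x, 'r) ncpoly set" where
  "mon_combinations F = {ncsum_list (map mon_multiple L) | L. \<forall>(c, u, g, w) \<in> set L. g \<in> F}"

lemma mon_multiple_eq_ncmul:
  "mon_multiple (c, u, g, w) = ncmul (ncmul (ncscale c (ncmon u)) g) (ncmon w)"
  by (simp add: ncmul_ncscale_left)

lemma supp_mon_multiple: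
  assumes "m \<in> supp (mon_multiple (c, u, g, w))"
  obtains mg where "mg \<in> supp g" and "m = u @ mg @ w"
proof -
  let ?k = "length m - length w"
  from assms have "drop ?k m = w" and "ncmul (ncmon u) g (take ?k m) \<noteq> 0"
    by (auto simp: supp_def ncscale_def ncmul_ncmon_right_apply split: if_splits)
  moreover from this have "take (length u) (take ?k m) = u" and "g (drop (length u) (take ?k m)) \<noteq> 0"
    by (auto simp: ncmul_ncmon_left_apply split: if_splits)
  ultimately have "m = u @ drop (length u) (take ?k m) @ w"
    by (metis append_assoc append_take_drop_id)
  with \<open>g (drop (length u) (take ?k m)) \<noteq> 0\<close> show ?thesis
    by (intro that) (auto simp: supp_def)
qed

lemma nczero_in_mon_combinations: "nczero \<in> mon_combinations F"
  unfolding mon_combinations_def by (intro CollectI exI[of _ "[]"]) (simp add: ncsum_list_def)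

lemma ncadd_in_mon_combinations:
  assumes "p \<in> mon_combinations F" and "q \<in> mon_combinations F"
  shows "ncadd p q \<in> mon_combinations F"
proof -
  obtain L1 L2 where "p = ncsum_list (map mon_multiple L1)" "\<forall>(c, u, g, w) \<in> set L1. g \<in> F"
    and "q = ncsum_list (map mon_multiple L2)" "\<forall>(c, u, g, w) \<in> set L2. g \<in> F"
    using assms unfolding mon_combinations_def by blast
  then show ?thesis unfolding mon_combinations_def
    by (intro CollectI exI[of _ "L1 @ L2"]) (auto simp: ncsum_list_append)
qed

lemma ncsum_list_in_mon_combinations:
  "set ps \<subseteq> mon_combinations F \<Longrightarrow> ncsum_list ps \<in> mon_combinations F"
  by (induction ps) (simp_all add: ncsum_list_def nczero_in_mon_combinations ncadd_in_mon_combinations)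

lemma mon_multiple_in_mon_combinations:
  assumes "g \<in> F"
  shows "mon_multiple (c, u, g, w) \<in> mon_combinations F"
  using assms unfolding mon_combinations_def
  by (intro CollectI exI[of _ "[(c, u, g, w)]"]) (simp add: ncsum_list_singleton)

lemma ncsum_list_in_nc_ideal: "set ps \<subseteq> nc_ideal F \<Longrightarrow> ncsum_list ps \<in> nc_ideal F"
  by (induction ps) (simp_all add: ncsum_list_def nc_ideal.zero nc_ideal.add)

lemma mon_combinations_subset_nc_ideal: "mon_combinations F \<subseteq> nc_ideal F"
proof
  fix f assume "f \<in> mon_combinations F"
  then obtain L where f: "f = ncsum_list (map mon_multiple L)"
    and gens: "\<forall>(c, u, g, w) \<in> set L. g \<in> F"
    unfolding mon_combinations_def by blast
  have "mon_multiple i \<in> nc_ideal F" if "i \<in> set L" for i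
    using that gens
    by (cases i) (auto simp del: mon_multiple.simps simp: mon_multiple_eq_ncmul
        intro!: nc_ideal.gen ncpoly_ncscale ncpoly_ncmon)
  then show "f \<in> nc_ideal F"
    unfolding f by (intro ncsum_list_in_nc_ideal) auto
qed

lemma nc_ideal_subset_mon_combinations: "nc_ideal F \<subseteq> mon_combinations F"
proof
  fix f assume "f \<in> nc_ideal F"
  then show "f \<in> mon_combinations F"
  proof (induction rule: nc_ideal.induct)
    case zero
    then show ?case by (rule nczero_in_mon_combinations)
  next
    case (gen g a b)
    obtain us where a: "a = ncsum_list (map (\<lambda>u. ncscale (a u) (ncmon u)) us)"
      using ncpoly_eq_ncsum_list_ncmon[OF gen(2)] .
    obtain ws where b: "b = ncsum_list (map (\<lambda>w. ncscale (b w) (ncmon w)) ws)"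
      using ncpoly_eq_ncsum_list_ncmon[OF gen(3)] .
    have "ncmul (ncmul a g) b =
        ncsum_list (map (\<lambda>w. ncsum_list (map (\<lambda>u. mon_multiple (a u * b w, u, g, w)) us)) ws)"
      by (subst a, subst b)
        (simp add: ncmul_ncsum_list_left ncmul_ncsum_list_right ncmul_ncscale_left
          ncmul_ncscale_right ncscale_ncsum_list ncscale_ncscale mult.commute o_def)
    also have "\<dots> \<in> mon_combinations F"
      using gen(1) mon_multiple_in_mon_combinations
      by (auto simp del: mon_multiple.simps intro!: ncsum_list_in_mon_combinations)
    finally show ?case .
  next
    case (add p q)
    then show ?case by (blast intro: ncadd_in_mon_combinations)
  qed
qed

lemma nc_ideal_eq_mon_combinations: "nc_ideal F = mon_combinations F"
  using mon_combinations_subset_nc_ideal nc_ideal_subset_mon_combinations by blast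

lemma rewrite_step_cancel:
  assumes "g \<in> F" and "mg \<in> supp g" and "a @ mg @ b \<in> supp f"
  shows "rewrite_step F f (ncadd f (mon_multiple (c, a, g, b)))"
  using assms unfolding rewrite_step_def mon_multiple.simps by blast


lemma mon_combinations_rewrites_to_nczero:
  assumes "f \<in> mon_combinations F"
  shows "rewrites_to F f nczero"
proof -
  obtain L where "f = ncsum_list (map mon_multiple L)" and "\<forall>(c, u, g, w) \<in> set L. g \<in> F"
    using assms unfolding mon_combinations_def by blast
  then show ?thesis
  proof (induction "length L" arbitrary: f L rule: less_induct)
    case less
    show ?case
    proof (cases "f = nczero")
      case True
      then show ?thesis by (simp add: rewrites_to_def)
    next
      case False
      then obtain m where m: "m \<in> supp f" by (auto simp: nczero_def supp_def)
      have "(\<Sum>t\<leftarrow>L. mon_multiple t m) \<noteq> 0"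
        using m less.prems(1) by (simp add: supp_def ncsum_list_apply o_def)
      then have "\<exists>t \<in> set L. mon_multiple t m \<noteq> 0"
        by (induction L) auto
      then obtain t where t: "t \<in> set L" "m \<in> supp (mon_multiple t)"
        by (auto simp: supp_def)
      obtain c u g w where t_eq: "t = (c, u, g, w)" by (cases t)
      obtain L1 L2 where L: "L = L1 @ (c, u, g, w) # L2"
        using split_list[OF t(1)] t_eq by blast
      from t(2) obtain mg where mg: "mg \<in> supp g" "m = u @ mg @ w"
        unfolding t_eq by (rule supp_mon_multiple)
      have g: "g \<in> F" using less.prems(2) L by auto
      let ?f' = "ncadd f (mon_multiple (- c, u, g, w))"
      have "rewrite_step F f ?f'"
        using rewrite_step_cancel[OF g mg(1)] m mg(2) by simp
      moreover have "?f' = ncsum_list (map mon_multiple (L1 @ L2))"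
        by (rule ext) (simp add: less.prems(1) L ncsum_list_apply ncadd_def ncscale_def)
      then have "rewrites_to F ?f' nczero"
        using less.hyps[of "L1 @ L2"] less.prems(2) L by auto
      ultimately show ?thesis
        unfolding rewrites_to_def by (rule converse_rtranclp_into_rtranclp)
    qed
  qed
qed

lemma rewrite_step_mon_combinations:
  assumes "rewrite_step F f f'" and "f' \<in> mon_combinations F"
  shows "f \<in> mon_combinations F"
proof -
  obtain g c a b where g: "g \<in> F" and f': "f' = ncadd f (mon_multiple (c, a, g, b))"
    using assms(1) unfolding rewrite_step_def mon_multiple.simps by blast
  then have "f = ncadd f' (mon_multiple (- c, a, g, b))"
    by (intro ext) (simp add: ncadd_def ncscale_def)
  then show ?thesis
    using assms(2) g by (simp only: ncadd_in_mon_combinations mon_multiple_in_mon_combinations)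
qed

lemma rewrites_to_nczero_iff_mon_combinations:
  "rewrites_to F f nczero \<longleftrightarrow> f \<in> mon_combinations F"
proof
  assume "rewrites_to F f nczero"
  then show "f \<in> mon_combinations F"
    unfolding rewrites_to_def
    by (induction rule: converse_rtranclp_induct)
      (auto intro: nczero_in_mon_combinations rewrite_step_mon_combinations)
qed (rule mon_combinations_rewrites_to_nczero)


lemma is_path_Cons:
  "is_path E s t (e # p) \<longleftrightarrow> e \<in> E \<and> (p = [] \<or> is_path E s t p \<and> s (hd p) = t e)"
proof (cases p)
  case (Cons a q)
  have "(\<forall>i. Suc i < length (e # p) \<longrightarrow> s ((e # p) ! Suc i) = t ((e # p) ! i)) \<longleftrightarrow>
      s a = t e \<and> (\<forall>i. Suc i < length p \<longrightarrow> s (p ! Suc i) = t (p ! i))"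
    unfolding Cons
    by (metis Suc_less_eq length_Cons nth_Cons_0 nth_Cons_Suc zero_less_Suc not0_implies_Suc)
  then show ?thesis using Cons unfolding is_path_def by auto
qed (simp add: is_path_def)

lemma sigma_mon_Nil: "sigma_mon V E s t l [] = Id_on V"
  unfolding sigma_mon_def is_path_def by (auto simp: Id_on_def)

lemma sigma_mon_subset:
  assumes "quiver V E s t"
  shows "sigma_mon V E s t l m \<subseteq> V \<times> V"
  using assms unfolding sigma_mon_def quiver_def is_path_def
  by (auto; metis hd_in_set last_in_set subsetD)

lemma sigma_mon_snoc:
  assumes "quiver V E s t"
  shows "sigma_mon V E s t l (m @ [x]) =
    {(s e, t e) | e. e \<in> E \<and> l e = x} O sigma_mon V E s t l m"
    (is "?lhs = ?edges O ?rhs")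
proof (intro equalityI subsetI)
  fix vw assume "vw \<in> ?lhs"
  then obtain e p where p: "is_path E s t (e # p)" "rev (map l p) = m" "l e = x"
    and vw: "vw = (s e, t (last (e # p)))"
    unfolding sigma_mon_def by (auto simp: neq_Nil_conv is_path_def)
  have "(t e, t (last (e # p))) \<in> ?rhs"
  proof (cases "p = []")
    case True
    with p assms show ?thesis unfolding sigma_mon_def quiver_def by (auto simp: is_path_Cons)
  next
    case False
    with p show ?thesis unfolding sigma_mon_def is_path_Cons by force
  qed
  with p(1,3) vw show "vw \<in> ?edges O ?rhs" by (auto simp: is_path_Cons)
next
  fix vw assume "vw \<in> ?edges O ?rhs"
  then obtain e v where e: "e \<in> E" "l e = x" "vw = (s e, v)" and ev: "(t e, v) \<in> ?rhs"
    by auto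
  show "vw \<in> ?lhs"
  proof (cases "m = []")
    case True
    with ev e have "is_path E s t [e]" "v = t e"
      by (auto simp: is_path_Cons sigma_mon_def is_path_def)
    with e True show ?thesis unfolding sigma_mon_def by force
  next
    case False
    with ev obtain p where "is_path E s t p" "rev (map l p) = m" "t e = s (hd p)" "v = t (last p)"
      unfolding sigma_mon_def by auto
    moreover from this have "p \<noteq> []" by (simp add: is_path_def)
    ultimately have "is_path E s t (e # p)" "rev (map l (e # p)) = m @ [x]"
      "vw = (s (hd (e # p)), t (last (e # p)))"
      using e by (auto simp: is_path_Cons)
    then show ?thesis unfolding sigma_mon_def by blast
  qed
qed

lemma sigma_mon_append:
  assumes "quiver V E s t"
  shows "sigma_mon V E s t l (m1 @ m2) = sigma_mon V E s t l m2 O sigma_mon V E s t l m1"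
proof (induction m2 rule: rev_induct)
  case Nil
  show ?case using sigma_mon_subset[OF assms, of l m1] by (fastforce simp: sigma_mon_Nil)
next
  case (snoc x m2)
  then show ?case
    using sigma_mon_snoc[OF assms, of l "m1 @ m2" x] sigma_mon_snoc[OF assms, of l m2 x]
    by (simp add: O_assoc)
qed


lemma ncsum_list_filter_supp:
  assumes f: "f = ncsum_list (map p L)"
    and supp_f: "\<forall>m \<in> supp f. P m"
    and homogeneous: "\<forall>i \<in> set L. \<forall>m \<in> supp (p i). \<forall>m' \<in> supp (p i). P m \<longleftrightarrow> P m'"
  shows "f = ncsum_list (map p (filter (\<lambda>i. \<exists>m \<in> supp (p i). P m) L))"
    (is "_ = ncsum_list (map p (filter ?keep L))")
proof
  fix x
  show "f x = ncsum_list (map p (filter ?keep L)) x"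
  proof (cases "P x")
    case True
    then have "(\<Sum>i\<leftarrow>filter ?keep L. p i x) = (\<Sum>i\<leftarrow>L. p i x)"
      by (intro sum_list_map_filter) (auto simp: supp_def)
    with f show ?thesis by (simp add: ncsum_list_apply o_def)
  next
    case False
    have "p i x = 0" if kept: "i \<in> set (filter ?keep L)" for i
    proof (rule ccontr)
      assume "p i x \<noteq> 0"
      then have "x \<in> supp (p i)" by (simp add: supp_def)
      moreover obtain m where "i \<in> set L" "m \<in> supp (p i)" "P m" using kept by auto
      ultimately show False using homogeneous False by blast
    qed
    then have "(\<Sum>i\<leftarrow>filter ?keep L. p i x) = (\<Sum>i\<leftarrow>filter ?keep L. 0)"
      by (intro arg_cong[where f = sum_list] map_cong) auto
    moreover from False supp_f have "f x = 0" by (auto simp: supp_def)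
    ultimately show ?thesis by (simp add: ncsum_list_apply o_def)
  qed
qed

lemma unif_compatible_supp_subset_singleton:
  assumes "quiver V E s t" and "supp h \<subseteq> {u}" and "sigma_mon V E s t l u \<noteq> {}"
  shows "unif_compatible V E s t l h"
proof -
  have "sigma_mon V E s t l u \<subseteq> sigma V E s t l h"
    using sigma_mon_subset[OF assms(1)] assms(2) unfolding sigma_def by auto
  then show ?thesis using assms(2,3) unfolding unif_compatible_def compatible_def by auto
qed

lemma sigma_mon_eq_on_supp_mon_multiple:
  assumes Q: "quiver V E s t" and g: "unif_compatible V E s t l g"
    and "m \<in> supp (mon_multiple (c, u, g, w))" and "m' \<in> supp (mon_multiple (c, u, g, w))"
  shows "sigma_mon V E s t l m = sigma_mon V E s t l m'"
proof -
  obtain mg where "mg \<in> supp g" "m = u @ mg @ w"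
    using assms(3) by (rule supp_mon_multiple)
  moreover obtain mg' where "mg' \<in> supp g" "m' = u @ mg' @ w"
    using assms(4) by (rule supp_mon_multiple)
  moreover from calculation have "sigma_mon V E s t l mg = sigma_mon V E s t l mg'"
    using g unfolding unif_compatible_def by blast
  ultimately show ?thesis by (simp add: sigma_mon_append[OF Q])
qed

lemma mon_multiple_factors_in_ncpoly_Q:
  assumes Q: "quiver V E s t" and g: "g \<in> ncpoly_Q V E s t l"
    and m: "m \<in> supp (mon_multiple (c, u, g, w))"
    and S: "S \<noteq> {}" "S \<subseteq> V \<times> V" "S \<subseteq> sigma_mon V E s t l m"
  shows "ncscale c (ncmon u) \<in> ncpoly_Q V E s t l" and "ncmon w \<in> ncpoly_Q V E s t l"
    and "S \<subseteq> sigma V E s t l (mon_multiple (c, u, g, w))"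
proof -
  obtain mg where "m = u @ mg @ w" using m by (rule supp_mon_multiple)
  then have "sigma_mon V E s t l m =
      sigma_mon V E s t l w O sigma_mon V E s t l mg O sigma_mon V E s t l u"
    by (simp add: sigma_mon_append[OF Q] O_assoc)
  with S have "sigma_mon V E s t l u \<noteq> {}" and "sigma_mon V E s t l w \<noteq> {}"
    by auto
  moreover have "supp (ncscale c (ncmon u)) \<subseteq> {u}" and "supp (ncmon w) \<subseteq> {w}"
    by (auto simp: supp_def ncscale_def ncmon_def)
  ultimately show "ncscale c (ncmon u) \<in> ncpoly_Q V E s t l" and "ncmon w \<in> ncpoly_Q V E s t l"
    unfolding ncpoly_Q_def
    by (auto intro: unif_compatible_supp_subset_singleton[OF Q] ncpoly_ncscale ncpoly_ncmon)
  have "unif_compatible V E s t l g" using g by (simp add: ncpoly_Q_def)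
  then have "\<forall>m' \<in> supp (mon_multiple (c, u, g, w)). sigma_mon V E s t l m' = sigma_mon V E s t l m"
    using sigma_mon_eq_on_supp_mon_multiple[OF Q _ _ m] by blast
  with S show "S \<subseteq> sigma V E s t l (mon_multiple (c, u, g, w))"
    unfolding sigma_def by auto
qed


lemma mon_combinations_Q_consequence:
  fixes F :: "('x, 'r::comm_ring_1) ncpoly set"
  assumes Q: "quiver V E s t" and F: "F \<subseteq> ncpoly_Q V E s t l"
    and f: "compatible V E s t l f" "f \<in> mon_combinations F"
  shows "Q_consequence V E s t l F f"
proof -
  let ?S = "sigma V E s t l f" and ?SM = "sigma_mon V E s t l"
  obtain L where L: "f = ncsum_list (map mon_multiple L)" and gens: "\<forall>(c, u, g, w) \<in> set L. g \<in> F"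
    using f(2) unfolding mon_combinations_def by blast
  let ?keep = "\<lambda>i. \<exists>m \<in> supp (mon_multiple i). ?S \<subseteq> ?SM m"
  have f_kept: "f = ncsum_list (map mon_multiple (filter ?keep L))"
  proof (rule ncsum_list_filter_supp[OF L])
    show "\<forall>m \<in> supp f. ?S \<subseteq> ?SM m" by (auto simp: sigma_def)
    show "\<forall>i \<in> set L. \<forall>m \<in> supp (mon_multiple i). \<forall>m' \<in> supp (mon_multiple i).
        ?S \<subseteq> ?SM m \<longleftrightarrow> ?S \<subseteq> ?SM m'"
    proof (intro ballI)
      fix i m m' assume i: "i \<in> set L" "m \<in> supp (mon_multiple i)" "m' \<in> supp (mon_multiple i)"
      obtain c u g w where i_eq: "i = (c, u, g, w)" by (cases i)
      with i(1) gens F have "unif_compatible V E s t l g" by (auto simp: ncpoly_Q_def)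
      with i(2,3) have "?SM m = ?SM m'"
        unfolding i_eq by (rule sigma_mon_eq_on_supp_mon_multiple[OF Q, rotated])
      then show "?S \<subseteq> ?SM m \<longleftrightarrow> ?S \<subseteq> ?SM m'" by simp
    qed
  qed
  define cs where
    "cs = map (\<lambda>(c, u, g, w). (ncscale c (ncmon u), g, ncmon w :: ('x, 'r) ncpoly)) (filter ?keep L)"
  have "map (\<lambda>(a, g, b). ncmul (ncmul a g) b) cs = map mon_multiple (filter ?keep L)"
    unfolding cs_def map_map by (intro map_cong) (auto simp: ncmul_ncscale_left)
  with f_kept have "f = ncsum_list (map (\<lambda>(a, g, b). ncmul (ncmul a g) b) cs)"
    by simp
  moreover have "a \<in> ncpoly_Q V E s t l \<and> b \<in> ncpoly_Q V E s t l \<and> g \<in> F \<and>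
      ?S \<subseteq> sigma V E s t l (ncmul (ncmul a g) b)" if abg_in: "(a, g, b) \<in> set cs" for a g b
  proof -
    obtain c u w m where t: "(c, u, g, w) \<in> set L" "m \<in> supp (mon_multiple (c, u, g, w))"
      "?S \<subseteq> ?SM m" and abg: "a = ncscale c (ncmon u)" "b = ncmon w"
      using abg_in unfolding cs_def by (auto simp del: mon_multiple.simps)
    have "g \<in> ncpoly_Q V E s t l" using t(1) gens F by auto
    moreover have "?S \<noteq> {}" "?S \<subseteq> V \<times> V"
      using f(1) by (auto simp: compatible_def sigma_def)
    ultimately show ?thesis
      using mon_multiple_factors_in_ncpoly_Q[OF Q _ t(2) _ _ t(3)] t(1) gens abg
      by (auto simp del: mon_multiple.simps simp: mon_multiple_eq_ncmul)
  qed
  ultimately show ?thesis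
    using f(1) unfolding Q_consequence_def by blast
qed

lemma Q_consequence_in_nc_ideal:
  assumes "Q_consequence V E s t l F f"
  shows "f \<in> nc_ideal F"
proof -
  obtain cs where "\<forall>(a, g, b) \<in> set cs. a \<in> ncpoly_Q V E s t l \<and> b \<in> ncpoly_Q V E s t l \<and> g \<in> F"
    and "f = ncsum_list (map (\<lambda>(a, g, b). ncmul (ncmul a g) b) cs)"
    using assms unfolding Q_consequence_def by blast
  then show ?thesis
    by (auto simp: ncpoly_Q_def intro!: ncsum_list_in_nc_ideal nc_ideal.gen)
qed

theorem theorem4p2:
  fixes V :: "'v set" and E :: "'e set" and s t :: "'e \<Rightarrow> 'v" and l :: "'e \<Rightarrow> 'x"
    and F :: "('x, 'r::comm_ring_1) ncpoly set" and f :: "('x, 'r) ncpoly"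
  assumes "quiver V E s t"
    and "F \<subseteq> ncpoly_Q V E s t l"
    and "ncpoly f"
  shows "((compatible V E s t l f \<and> f \<in> nc_ideal F) \<longleftrightarrow>
          (compatible V E s t l f \<and> rewrites_to F f nczero))
       \<and> ((compatible V E s t l f \<and> rewrites_to F f nczero) \<longleftrightarrow>
          Q_consequence V E s t l F f)"
proof -
  have "f \<in> nc_ideal F \<longleftrightarrow> rewrites_to F f nczero"
    by (simp add: nc_ideal_eq_mon_combinations rewrites_to_nczero_iff_mon_combinations)
  moreover have "compatible V E s t l f \<and> f \<in> nc_ideal F \<longleftrightarrow> Q_consequence V E s t l F f"
  proof
    assume "compatible V E s t l f \<and> f \<in> nc_ideal F"
    then show "Q_consequence V E s t l F f"
      using mon_combinations_Q_consequence[OF assms(1,2)] by (simp add: nc_ideal_eq_mon_combinations)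
  next
    assume Q: "Q_consequence V E s t l F f"
    then show "compatible V E s t l f \<and> f \<in> nc_ideal F"
      using Q_consequence_in_nc_ideal[OF Q] unfolding Q_consequence_def by blast
  qed
  ultimately show ?thesis by blast
qed

end
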